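(* Let $0\le\ell\le n$ and $\mu\in P^+_{\ell,n}$. For $1\le r\le n-1$ let $A_r,D_r$ be the components of $A,D$ of total degree $r$ in $\omega_2,\omega_4,\omega_6$. Then \[ A_rv_\mu=\sum_{\substack{\lambda\in P^+_{\ell,n}\\ \lambda/\mu=b,\ |b|=r}}\Omega(b)\,v_\lambda,\qquad D_rv_\mu=\sum_{\substack{\lambda\in P^+_{\ell,n}\\ \mu/\lambda=b,\ |b|=n-r}}\overline{\Omega}(b)\,v_\lambda, \] where the sums run over $\lambda\in P^+_{\ell,n}$ such that $\lambda/\mu$ (resp. $\mu/\lambda$) is a broken rim hook $b$ of length $r$ (resp. $n-r$). The first formula also holds for $A_0$ and the second for $D_n$, where the empty skew diagram ($\lambda=\mu$) is admitted as a broken rim hook.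
   Context: Let $V=\mathbb{C}v_0\oplus\mathbb{C}v_1$, $e_{ab}$ the matrix units ($e_{ab}v_c=\delta_{bc}v_a$). For indeterminates $\omega=(\omega_1,\dots,\omega_6)$ let $R(\omega)=e_{00}\otimes(\omega_1e_{00}+\omega_3e_{11})+e_{01}\otimes\omega_5e_{10}+e_{10}\otimes\omega_6e_{01}+e_{11}\otimes(\omega_4e_{00}+\omega_2e_{11})\in\operatorname{End}(V\otimes V)\otimes\mathbb{C}[\omega]$. On $V_0\otimes V^{\otimes n}$ ($V_0$ an auxiliary copy of $V$) let $T(\omega)=R_{0n}(\omega)\cdots R_{01}(\omega)$ and write $T=e_{00}\otimes A+e_{01}\otimes B+e_{10}\otimes C+e_{11}\otimes D$. For a binary string $\sigma\in\{0,1\}^n$ with 1's exactly at positions $i_1<\dots<i_\ell$, $v_\sigma=v_{\sigma_1}\otimes\cdots\otimes v_{\sigma_n}$ is labelled $v_\lambda$ with $\lambda=(i_\ell-\ell,i_{\ell-1}-(\ell-1),\dots,i_1-1)\in P^+_{\ell,n}$, the partitions with at most $\ell$ parts, all $\le n-\ell$. A broken rim hook is a skew diagram $b=\lambda/\mu$ ($\mu\subset\lambda$) containing no $2\times2$ block of boxes; its edge-connected components are (connected) rim hooks $h$, $\#b$ is their number, $|b|$ the number of boxes, $r(h)$, $c(h)$ the numbers of rows and columns $h$ occupies. For $\lambda,\mu\in P^+_{\ell,n}$, $\bar r(b)$ is the number of rows $1\le i\le\ell$ containing no box of $b$ and $\bar c(b)$ the number of columns $1\le j\le n-\ell$ containing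 no box of $b$. Set $\Omega(b)=\Omega(b;\omega)=\omega_1^{\bar c(b)}\omega_3^{\bar r(b)}(\omega_5\omega_6)^{\#b}\prod_{h\in b}\omega_2^{r(h)-1}\omega_4^{c(h)-1}$ and $\overline{\Omega}(b;\omega_1,\dots,\omega_6)=\Omega(b;\omega_4,\omega_3,\omega_2,\omega_1,\omega_6,\omega_5)$. *)

theory Defs
  imports Complex_Main "HOL-Library.Poly_Mapping" "HOL-Library.Function_Algebras"
begin

text \<open>Multivariate polynomials with complex coefficients: finitely supported maps
  from monomials (exponent vectors \<open>nat \<Rightarrow>\<^sub>0 nat\<close>, variable \<open>\<omega>_i\<close> has index i)
  to coefficients.\<close>
type_synonym mpoly = "(nat \<Rightarrow>\<^sub>0 nat) \<Rightarrow>\<^sub>0 complex"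

definition omega :: "nat \<Rightarrow> mpoly" where
  "omega i = Poly_Mapping.single (Poly_Mapping.single i 1) 1"

definition deg246 :: "(nat \<Rightarrow>\<^sub>0 nat) \<Rightarrow> nat" where
  "deg246 m = Poly_Mapping.lookup m 2 + Poly_Mapping.lookup m 4 + Poly_Mapping.lookup m 6"

definition hcomp :: "nat \<Rightarrow> mpoly \<Rightarrow> mpoly" where
  "hcomp r p = Poly_Mapping.mapp (\<lambda>m c. if deg246 m = r then c else 0) p"

text \<open>A 2x2 matrix is a function of (row, column) indices in {0,1}.\<close>
definition eu :: "nat \<Rightarrow> nat \<Rightarrow> nat \<Rightarrow> nat \<Rightarrow> mpoly" where
  "eu a b = (\<lambda>i j. if i = a \<and> j = b then 1 else 0)"

text \<open>Tensor product of two 2x2 matrices, as an operator on V \<otimes> V: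
  entry \<open>\<langle>v_a \<otimes> v_b | X \<otimes> Y | v_c \<otimes> v_d\<rangle> = X a c * Y b d\<close>.\<close>
definition tens :: "(nat \<Rightarrow> nat \<Rightarrow> mpoly) \<Rightarrow> (nat \<Rightarrow> nat \<Rightarrow> mpoly)
    \<Rightarrow> nat \<Rightarrow> nat \<Rightarrow> nat \<Rightarrow> nat \<Rightarrow> mpoly" where
  "tens X Y = (\<lambda>a b c d. X a c * Y b d)"

definition madd :: "(nat \<Rightarrow> nat \<Rightarrow> mpoly) \<Rightarrow> (nat \<Rightarrow> nat \<Rightarrow> mpoly) \<Rightarrow> nat \<Rightarrow> nat \<Rightarrow> mpoly" where
  "madd X Y = (\<lambda>i j. X i j + Y i j)"

definition msmult :: "mpoly \<Rightarrow> (nat \<Rightarrow> nat \<Rightarrow> mpoly) \<Rightarrow> nat \<Rightarrow> nat \<Rightarrow> mpoly" where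
  "msmult c X = (\<lambda>i j. c * X i j)"

text \<open>R(\<omega>) = e00\<otimes>(\<omega>1 e00 + \<omega>3 e11) + e01\<otimes>\<omega>5 e10 + e10\<otimes>\<omega>6 e01 + e11\<otimes>(\<omega>4 e00 + \<omega>2 e11);
  \<open>Rmat a b c d = \<langle>v_a \<otimes> v_b | R | v_c \<otimes> v_d\<rangle>\<close> (first factor = auxiliary space).\<close>
definition Rmat :: "nat \<Rightarrow> nat \<Rightarrow> nat \<Rightarrow> nat \<Rightarrow> mpoly" where
  "Rmat = (\<lambda>a b c d.
      tens (eu 0 0) (madd (msmult (omega 1) (eu 0 0)) (msmult (omega 3) (eu 1 1))) a b c d
    + tens (eu 0 1) (msmult (omega 5) (eu 1 0)) a b c d
    + tens (eu 1 0) (msmult (omega 6) (eu 0 1)) a b c d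
    + tens (eu 1 1) (madd (msmult (omega 4) (eu 0 0)) (msmult (omega 2) (eu 1 1))) a b c d)"

text \<open>Matrix entries of the monodromy matrix \<open>T = R_{0n} \<cdots> R_{01}\<close> on \<open>V_0 \<otimes> V^{\<otimes>n}\<close>:
  \<open>Tmat \<tau> \<sigma> b a = \<langle>v_b \<otimes> v_\<tau> | T | v_a \<otimes> v_\<sigma>\<rangle>\<close>, where strings are lists of 0/1.
  Since \<open>T = (R_{0n} \<cdots> R_{02}) R_{01}\<close>, the recursion peels off site 1 (the head).\<close>
fun Tmat :: "nat list \<Rightarrow> nat list \<Rightarrow> nat \<Rightarrow> nat \<Rightarrow> mpoly" where
  "Tmat [] [] b a = (if b = a then 1 else 0)"
| "Tmat (y # ys) (x # xs) b a = (\<Sum>c\<in>{0,1}. Tmat ys xs b c * Rmat c y a x)"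
| "Tmat _ _ b a = 0"

text \<open>T = e00\<otimes>A + e01\<otimes>B + e10\<otimes>C + e11\<otimes>D, so A and D are the (0,0) and (1,1) blocks.\<close>
definition Aop :: "nat list \<Rightarrow> nat list \<Rightarrow> mpoly" where
  "Aop \<tau> \<sigma> = Tmat \<tau> \<sigma> 0 0"

definition Dop :: "nat list \<Rightarrow> nat list \<Rightarrow> mpoly" where
  "Dop \<tau> \<sigma> = Tmat \<tau> \<sigma> 1 1"

definition strings :: "nat \<Rightarrow> nat list set" where
  "strings n = {\<sigma>. length \<sigma> = n \<and> set \<sigma> \<subseteq> {0, 1}}"

text \<open>A vector is given by its coordinates in the basis \<open>v_\<sigma>\<close>, \<open>\<sigma> \<in> strings n\<close>;
  an operator by its matrix; application to a vector:\<close>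
definition opapply :: "nat \<Rightarrow> (nat list \<Rightarrow> nat list \<Rightarrow> mpoly) \<Rightarrow> (nat list \<Rightarrow> mpoly) \<Rightarrow> nat list \<Rightarrow> mpoly" where
  "opapply n M v = (\<lambda>\<tau>. \<Sum>\<sigma>\<in>strings n. M \<tau> \<sigma> * v \<sigma>)"

definition Acomp :: "nat \<Rightarrow> nat list \<Rightarrow> nat list \<Rightarrow> mpoly" where
  "Acomp r \<tau> \<sigma> = hcomp r (Aop \<tau> \<sigma>)"

definition Dcomp :: "nat \<Rightarrow> nat list \<Rightarrow> nat list \<Rightarrow> mpoly" where
  "Dcomp r \<tau> \<sigma> = hcomp r (Dop \<tau> \<sigma>)"

text \<open>A partition is a function \<open>\<lambda> :: nat \<Rightarrow> nat\<close> with parts \<open>\<lambda> 1 \<ge> \<lambda> 2 \<ge> \<dots>\<close>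
  (index 0 unused, set to 0). \<open>P^+_{l,n}\<close>: at most \<open>l\<close> parts, all \<open>\<le> n - l\<close>.\<close>
definition Ppart :: "nat \<Rightarrow> nat \<Rightarrow> (nat \<Rightarrow> nat) set" where
  "Ppart l n = {la. (\<forall>i\<ge>1. la (i + 1) \<le> la i) \<and> la 0 = 0 \<and> (\<forall>i>l. la i = 0)
                 \<and> (\<forall>i. la i \<le> n - l)}"

text \<open>Positions (1-indexed, increasing) of the 1's in a string: \<open>i_1 < \<dots> < i_l\<close>.\<close>
definition onepos :: "nat list \<Rightarrow> nat list" where
  "onepos \<sigma> = [p + 1. p \<leftarrow> [0..<length \<sigma>], \<sigma> ! p = 1]"

text \<open>Label \<open>\<lambda> = (i_l - l, i_{l-1} - (l-1), \<dots>, i_1 - 1)\<close>, i.e.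
  \<open>\<lambda>_j = i_{l+1-j} - (l+1-j)\<close>.\<close>
definition label :: "nat list \<Rightarrow> nat \<Rightarrow> nat" where
  "label \<sigma> = (\<lambda>j. let ps = onepos \<sigma>; l = length ps in
      if 1 \<le> j \<and> j \<le> l then ps ! (l - j) - (l + 1 - j) else 0)"

definition vlam :: "nat \<Rightarrow> nat \<Rightarrow> (nat \<Rightarrow> nat) \<Rightarrow> nat list \<Rightarrow> mpoly" where
  "vlam n l la = (\<lambda>\<tau>. if \<tau> \<in> strings n \<and> length (onepos \<tau>) = l \<and> label \<tau> = la then 1 else 0)"

definition diagram :: "(nat \<Rightarrow> nat) \<Rightarrow> (nat \<times> nat) set" where
  "diagram la = {(i, j). 1 \<le> i \<and> 1 \<le> j \<and> j \<le> la i}"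

definition contained :: "(nat \<Rightarrow> nat) \<Rightarrow> (nat \<Rightarrow> nat) \<Rightarrow> bool" where
  "contained \<mu> la \<longleftrightarrow> (\<forall>i. \<mu> i \<le> la i)"

text \<open>The skew diagram \<open>\<lambda>/\<mu>\<close> (meaningful when \<open>\<mu> \<subseteq> \<lambda>\<close>).\<close>
definition skew :: "(nat \<Rightarrow> nat) \<Rightarrow> (nat \<Rightarrow> nat) \<Rightarrow> (nat \<times> nat) set" where
  "skew la \<mu> = diagram la - diagram \<mu>"

definition broken_rim_hook :: "(nat \<times> nat) set \<Rightarrow> bool" where
  "broken_rim_hook b \<longleftrightarrow>
     \<not> (\<exists>i j. (i, j) \<in> b \<and> (i + 1, j) \<in> b \<and> (i, j + 1) \<in> b \<and> (i + 1, j + 1) \<in> b)"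

definition adj_in :: "(nat \<times> nat) set \<Rightarrow> ((nat \<times> nat) \<times> (nat \<times> nat)) set" where
  "adj_in b = {((i, j), (i', j')). (i, j) \<in> b \<and> (i', j') \<in> b \<and>
      ((i = i' \<and> (j' = j + 1 \<or> j = j' + 1)) \<or> (j = j' \<and> (i' = i + 1 \<or> i = i' + 1)))}"

definition components :: "(nat \<times> nat) set \<Rightarrow> (nat \<times> nat) set set" where
  "components b = {{y \<in> b. (x, y) \<in> (adj_in b)\<^sup>*} | x. x \<in> b}"

definition nrows :: "(nat \<times> nat) set \<Rightarrow> nat" where
  "nrows h = card (fst ` h)"

definition ncols :: "(nat \<times> nat) set \<Rightarrow> nat" where
  "ncols h = card (snd ` h)"

definition rbar :: "nat \<Rightarrow> (nat \<times> nat) set \<Rightarrow> nat" where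
  "rbar l b = card {i \<in> {1..l}. \<forall>j. (i, j) \<notin> b}"

definition cbar :: "nat \<Rightarrow> nat \<Rightarrow> (nat \<times> nat) set \<Rightarrow> nat" where
  "cbar l n b = card {j \<in> {1..n - l}. \<forall>i. (i, j) \<notin> b}"

definition Omega_gen :: "(nat \<Rightarrow> mpoly) \<Rightarrow> nat \<Rightarrow> nat \<Rightarrow> (nat \<times> nat) set \<Rightarrow> mpoly" where
  "Omega_gen w l n b = w 1 ^ cbar l n b * w 3 ^ rbar l b * (w 5 * w 6) ^ card (components b)
     * (\<Prod>h\<in>components b. w 2 ^ (nrows h - 1) * w 4 ^ (ncols h - 1))"

definition Omega :: "nat \<Rightarrow> nat \<Rightarrow> (nat \<times> nat) set \<Rightarrow> mpoly" where
  "Omega l n b = Omega_gen omega l n b"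

definition Omegabar :: "nat \<Rightarrow> nat \<Rightarrow> (nat \<times> nat) set \<Rightarrow> mpoly" where
  "Omegabar l n b = Omega_gen
     (\<lambda>i. if i = 1 then omega 4 else if i = 2 then omega 3 else if i = 3 then omega 2
          else if i = 4 then omega 1 else if i = 5 then omega 6 else if i = 6 then omega 5 else 0)
     l n b"

end

theory Submission
  imports Defs
begin

(* The matrix coefficient of T(\<omega>) between basis strings is a transfer-matrix product over the
   sites, so it can be computed by peeling sites off the front of the two strings.  Prepending
   sites changes the pair of labels (\<lambda>, \<mu>) in one of five elementary ways: a new first column
   in both, a new empty last row, or a single new box in the first column of the last row, which
   is either attached to the box on its right, attached to the box above it, or isolated.  Each
   move keeps \<lambda>/\<mu> a broken rim hook, raises the exponent of one \<omega>\<^sub>i in \<Omega>(\<lambda>/\<mu>) by one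
   (of both \<omega>\<^sub>5 and \<omega>\<^sub>6 for the isolated box) and adds at most one box; every other
   configuration of the first sites gives zero.  By induction the coefficient of A is \<Omega>(\<lambda>/\<mu>)
   or 0, and the same bookkeeping shows that this monomial has degree |\<lambda>/\<mu>| in
   \<omega>\<^sub>2, \<omega>\<^sub>4, \<omega>\<^sub>6 and degree n - |\<lambda>/\<mu>| in \<omega>\<^sub>1, \<omega>\<^sub>3, \<omega>\<^sub>5.  Exchanging
   the two strings together with the auxiliary states 0 and 1 turns the vertex weights into
   (\<omega>\<^sub>4, \<omega>\<^sub>3, \<omega>\<^sub>2, \<omega>\<^sub>1, \<omega>\<^sub>6, \<omega>\<^sub>5), so D is A for the transposed problem with
   the weights of \<Omega>-bar. *)

section \<open>Binary strings and their labels\<close>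

(* A constant of its own, because the simplifier rewrites the numeral in count_list s 1 to Suc 0,
   after which rules stated for count_list s 1 no longer match. *)
definition ones :: "nat list \<Rightarrow> nat" where
  "ones s = count_list s 1"

lemma ones_Nil [simp]: "ones [] = 0"
  by (simp add: ones_def)

lemma ones_Cons [simp]: "ones (x # s) = (if x = 1 then Suc (ones s) else ones s)"
  by (simp add: ones_def)

lemma ones_le_length: "ones s \<le> length s"
  by (simp add: ones_def count_le_length)

lemma onepos_Nil [simp]: "onepos [] = []"
  by (simp add: onepos_def)

lemma onepos_Cons:
  "onepos (x # s) = (if x = 1 then 1 # map Suc (onepos s) else map Suc (onepos s))"
proof -
  have "[0..<length (x # s)] = 0 # map Suc [0..<length s]"
    by (simp add: map_Suc_upt upt_conv_Cons del: upt_Suc)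
  then show ?thesis
    unfolding onepos_def
    by (simp add: comp_def map_concat del: upt_Suc; intro arg_cong[where f = concat] map_cong; simp)
qed

lemma length_onepos: "length (onepos s) = ones s"
  by (induction s) (simp_all add: onepos_Cons)

lemma onepos_nth_ge: "k < ones s \<Longrightarrow> Suc k \<le> onepos s ! k"
proof (induction s arbitrary: k)
  case (Cons x s)
  then show ?case
    by (cases "x = 1"; cases k) (auto simp: onepos_Cons length_onepos intro: Suc_leD)
qed simp

definition add_col :: "nat \<Rightarrow> (nat \<Rightarrow> nat) \<Rightarrow> nat \<Rightarrow> nat" where
  "add_col l f = (\<lambda>j. if 1 \<le> j \<and> j \<le> l then Suc (f j) else 0)"

lemma label_eq:
  "label s j = (if 1 \<le> j \<and> j \<le> ones s then onepos s ! (ones s - j) - (ones s + 1 - j) else 0)"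
  by (simp add: label_def length_onepos Let_def)

lemma label_Nil: "label [] = (\<lambda>_. 0)"
  by (auto simp: label_eq)

lemma label_Cons [simp]: "label (x # s) = (if x = 1 then label s else add_col (ones s) (label s))"
proof
  fix j
  show "label (x # s) j = (if x = 1 then label s else add_col (ones s) (label s)) j"
  proof (cases "1 \<le> j \<and> j \<le> ones s")
    case True
    then have "Suc (ones s) - j = Suc (ones s - j)" "Suc (ones s - j) \<le> onepos s ! (ones s - j)"
      using onepos_nth_ge[of "ones s - j" s] by auto
    with True show ?thesis by (simp add: label_eq onepos_Cons length_onepos add_col_def) arith
  qed (auto simp: label_eq onepos_Cons length_onepos add_col_def le_Suc_eq)
qed

definition zero_outside :: "nat \<Rightarrow> (nat \<Rightarrow> nat) \<Rightarrow> bool" where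
  "zero_outside l f \<longleftrightarrow> (\<forall>j. j = 0 \<or> l < j \<longrightarrow> f j = 0)"

lemma zero_outsideD: "zero_outside l f \<Longrightarrow> j = 0 \<or> l < j \<Longrightarrow> f j = 0"
  by (auto simp: zero_outside_def)

lemma zero_outside_mono: "zero_outside l f \<Longrightarrow> l \<le> l' \<Longrightarrow> zero_outside l' f"
  by (auto simp: zero_outside_def)

lemma zero_outside_label: "zero_outside (ones s) (label s)"
  by (simp add: zero_outside_def label_eq)

lemma zero_outside_add_col: "zero_outside l (add_col l f)"
  by (simp add: zero_outside_def add_col_def)

lemma Ppart_antimono:
  assumes "la \<in> Ppart l n" "1 \<le> j" "j \<le> k"
  shows "la k \<le> la j"
proof -
  have "la (Suc (Suc i)) \<le> la (Suc i)" for i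
    using assms(1) by (auto simp: Ppart_def)
  then have "la (Suc (k - 1)) \<le> la (Suc (j - 1))"
    using lift_Suc_antimono_le[of "\<lambda>i. la (Suc i)"] assms(3) by simp
  with assms(2,3) show ?thesis by simp
qed

lemma label_in_Ppart: "label s \<in> Ppart (ones s) (length s)"
proof (induction s)
  case Nil
  then show ?case by (simp add: Ppart_def label_Nil)
next
  case (Cons x s)
  show ?case
  proof (cases "x = 1")
    case True
    with Cons.IH show ?thesis by (auto simp: Ppart_def)
  next
    case False
    with Cons.IH ones_le_length[of s] show ?thesis
      by (auto simp: Ppart_def add_col_def Suc_diff_le)
  qed
qed

lemma Ppart_drop_empty_row:
  assumes la: "la \<in> Ppart l (Suc m)" and "1 \<le> l" "la l = 0"
  shows "la \<in> Ppart (l - 1) m"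
proof -
  have "la i = 0" if "l - 1 < i" for i
  proof (cases "i = l")
    case False
    with that la show ?thesis by (simp add: Ppart_def)
  qed (simp add: \<open>la l = 0\<close>)
  moreover have "m - (l - 1) = Suc m - l"
    using \<open>1 \<le> l\<close> by simp
  ultimately show ?thesis
    using la by (simp add: Ppart_def)
qed

lemma Ppart_drop_first_col:
  assumes la: "la \<in> Ppart l (Suc m)" and last: "l = 0 \<or> 0 < la l"
  shows "l \<le> m" and "\<exists>la'\<in>Ppart l m. la = add_col l la'"
proof -
  have pos: "0 < la j" if "1 \<le> j" "j \<le> l" for j
    using Ppart_antimono[OF la that] last that by auto
  show "l \<le> m"
  proof (cases "l = 0")
    case False
    then have "0 < la l" using last by simp
    moreover have "la l \<le> Suc m - l" using la by (simp add: Ppart_def)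
    ultimately show ?thesis by simp
  qed simp
  define la' where "la' = (\<lambda>j. if 1 \<le> j \<and> j \<le> l then la j - 1 else 0)"
  have "la j \<le> Suc (m - l)" for j
    using la \<open>l \<le> m\<close> by (simp add: Ppart_def Suc_diff_le)
  then have "la j - 1 \<le> m - l" for j
    by (simp add: le_diff_conv)
  then have "la' \<in> Ppart l m"
    using la by (auto simp: Ppart_def la'_def diff_le_mono)
  moreover have "la = add_col l la'"
  proof
    fix j
    show "la j = add_col l la' j"
      using pos[of j] la by (cases "j = 0") (auto simp: Ppart_def la'_def add_col_def)
  qed
  ultimately show "\<exists>la'\<in>Ppart l m. la = add_col l la'" by blast
qed

lemma strings_Cons: "x # s \<in> strings (Suc n) \<longleftrightarrow> (x = 0 \<or> x = 1) \<and> s \<in> strings n"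
  by (auto simp: strings_def)

lemma finite_strings: "finite (strings n)"
  using finite_lists_length_eq[of "{0, 1 :: nat}" n] by (simp add: strings_def conj_commute)

lemma string_of_partition:
  "la \<in> Ppart l n \<Longrightarrow> l \<le> n \<Longrightarrow> \<exists>s\<in>strings n. ones s = l \<and> label s = la"
proof (induction n arbitrary: l la)
  case 0
  then show ?case by (intro bexI[of _ "[]"]) (auto simp: strings_def label_Nil Ppart_def)
next
  case (Suc m)
  show ?case
  proof (cases "1 \<le> l \<and> la l = 0")
    case True
    moreover have "la \<in> Ppart (l - 1) m" "l - 1 \<le> m"
      using Ppart_drop_empty_row[OF Suc.prems(1)] True Suc.prems(2) by auto
    ultimately obtain s where "s \<in> strings m" "ones s = l - 1" "label s = la"
      using Suc.IH by blast
    with True show ?thesis by (intro bexI[of _ "1 # s"]) (auto simp: strings_Cons)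
  next
    case False
    then have "l = 0 \<or> 0 < la l" by auto
    with Ppart_drop_first_col[OF Suc.prems(1)]
    obtain la' where "l \<le> m" "la' \<in> Ppart l m" "la = add_col l la'" by blast
    with Suc.IH obtain s where "s \<in> strings m" "ones s = l" "label s = la'" by blast
    with \<open>la = add_col l la'\<close> show ?thesis
      by (intro bexI[of _ "0 # s"]) (auto simp: strings_Cons)
  qed
qed

lemma onepos_nth_eq_label:
  assumes "k < ones s"
  shows "onepos s ! k = label s (ones s - k) + Suc k"
proof -
  have "ones s + 1 - (ones s - k) = Suc k" "ones s - (ones s - k) = k"
    using assms by simp_all
  with assms onepos_nth_ge[OF assms] show ?thesis by (auto simp: label_eq)
qed

lemma Suc_mem_onepos_iff: "p < length s \<Longrightarrow> Suc p \<in> set (onepos s) \<longleftrightarrow> s ! p = 1"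
  by (auto simp: onepos_def)

lemma string_eq_if_label_eq:
  assumes s: "s \<in> strings n" and s': "s' \<in> strings n"
    and "ones s = ones s'" "label s = label s'"
  shows "s = s'"
proof -
  have "onepos s = onepos s'"
    using assms(3,4) by (intro nth_equalityI) (simp_all add: length_onepos onepos_nth_eq_label)
  moreover have "length s = n" "length s' = n" "set s \<subseteq> {0, 1}" "set s' \<subseteq> {0, 1}"
    using s s' by (simp_all add: strings_def)
  ultimately have "s ! p = s' ! p" if "p < n" for p
    using that Suc_mem_onepos_iff[of p s] Suc_mem_onepos_iff[of p s'] nth_mem[of p s] nth_mem[of p s']
    by fastforce
  with \<open>length s = n\<close> \<open>length s' = n\<close> show ?thesis
    by (simp add: nth_equalityI)
qed

lemma finite_Ppart: "l \<le> n \<Longrightarrow> finite (Ppart l n)"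
  using string_of_partition
  by (intro finite_subset[OF _ finite_imageI[OF finite_strings]]) (fastforce simp: image_iff)

section \<open>Skew diagrams\<close>

lemma mem_skew: "(i, j) \<in> skew la mu \<longleftrightarrow> 1 \<le> i \<and> 1 \<le> j \<and> mu i < j \<and> j \<le> la i"
  by (auto simp: skew_def diagram_def)

lemma mem_apsnd_Suc_image: "(i, j) \<in> apsnd Suc ` S \<longleftrightarrow> (\<exists>j'. j = Suc j' \<and> (i, j') \<in> S)"
  by force

lemma skew_bounds:
  assumes "zero_outside l la" "q \<in> skew la mu"
  shows "1 \<le> fst q" "fst q \<le> l" "1 \<le> snd q"
proof -
  obtain i j where q: "q = (i, j)" by fastforce
  show "1 \<le> fst q" "1 \<le> snd q" using assms(2) by (simp_all add: q mem_skew)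
  show "fst q \<le> l"
  proof (rule ccontr)
    assume "\<not> fst q \<le> l"
    then have "la i = 0" using zero_outsideD[OF assms(1)] by (simp add: q)
    with assms(2) show False by (auto simp: q mem_skew)
  qed
qed

lemma finite_skew:
  assumes "zero_outside l la"
  shows "finite (skew la mu)"
proof (rule finite_subset)
  show "skew la mu \<subseteq> Sigma {1..l} (\<lambda>i. {1..la i})"
  proof
    fix q
    assume q: "q \<in> skew la mu"
    with skew_bounds(2)[OF assms q] show "q \<in> Sigma {1..l} (\<lambda>i. {1..la i})"
      by (cases q) (simp add: mem_skew)
  qed
qed simp

lemma skew_add_col_add_col:
  assumes la: "zero_outside l la" and mu: "zero_outside l mu"
  shows "skew (add_col l la) (add_col l mu) = apsnd Suc ` skew la mu"
    and "contained (add_col l mu) (add_col l la) \<longleftrightarrow> contained mu la"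
proof -
  show "skew (add_col l la) (add_col l mu) = apsnd Suc ` skew la mu"
  proof (rule set_eqI, clarify)
    fix i j
    show "(i, j) \<in> skew (add_col l la) (add_col l mu) \<longleftrightarrow> (i, j) \<in> apsnd Suc ` skew la mu"
      using zero_outsideD[OF la, of i]
      by (cases j) (auto simp: mem_skew mem_apsnd_Suc_image add_col_def)
  qed
  have "add_col l mu i \<le> add_col l la i \<longleftrightarrow> mu i \<le> la i" for i
    using zero_outsideD[OF la, of i] zero_outsideD[OF mu, of i] by (auto simp: add_col_def)
  then show "contained (add_col l mu) (add_col l la) \<longleftrightarrow> contained mu la"
    by (simp add: contained_def)
qed

lemma skew_add_col_box_left:
  assumes la: "zero_outside (Suc L) la" and mu: "zero_outside L mu"
  shows "skew (add_col (Suc L) (add_col (Suc L) la)) (add_col L mu)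
           = insert (Suc L, 1) (apsnd Suc ` skew (add_col (Suc L) la) mu)"
    and "contained (add_col L mu) (add_col (Suc L) (add_col (Suc L) la))
           \<longleftrightarrow> contained mu (add_col (Suc L) la)"
proof -
  show "skew (add_col (Suc L) (add_col (Suc L) la)) (add_col L mu)
          = insert (Suc L, 1) (apsnd Suc ` skew (add_col (Suc L) la) mu)"
  proof (rule set_eqI, clarify)
    fix i j
    show "(i, j) \<in> skew (add_col (Suc L) (add_col (Suc L) la)) (add_col L mu)
          \<longleftrightarrow> (i, j) \<in> insert (Suc L, 1) (apsnd Suc ` skew (add_col (Suc L) la) mu)"
      using zero_outsideD[OF mu, of i]
      by (cases j) (auto simp: mem_skew mem_apsnd_Suc_image add_col_def le_Suc_eq)
  qed
  have "add_col L mu i \<le> add_col (Suc L) (add_col (Suc L) la) i \<longleftrightarrow> mu i \<le> add_col (Suc L) la i" for i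
    using zero_outsideD[OF la, of i] zero_outsideD[OF mu, of i] by (auto simp: add_col_def le_Suc_eq)
  then show "contained (add_col L mu) (add_col (Suc L) (add_col (Suc L) la))
               \<longleftrightarrow> contained mu (add_col (Suc L) la)"
    by (simp add: contained_def)
qed

lemma skew_add_col_box_below:
  assumes la: "zero_outside L la" and mu: "zero_outside L mu"
  shows "skew (add_col (Suc L) la) mu = insert (Suc L, 1) (skew (add_col L la) mu)"
    and "contained mu (add_col (Suc L) la) \<longleftrightarrow> contained mu (add_col L la)"
proof -
  show "skew (add_col (Suc L) la) mu = insert (Suc L, 1) (skew (add_col L la) mu)"
  proof (rule set_eqI, clarify)
    fix i j
    show "(i, j) \<in> skew (add_col (Suc L) la) mu \<longleftrightarrow> (i, j) \<in> insert (Suc L, 1) (skew (add_col L la) mu)"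
      using zero_outsideD[OF la, of i] zero_outsideD[OF mu, of i]
      by (cases "i = Suc L") (auto simp: mem_skew add_col_def le_Suc_eq)
  qed
  have "mu i \<le> add_col (Suc L) la i \<longleftrightarrow> mu i \<le> add_col L la i" for i
    using zero_outsideD[OF la, of i] zero_outsideD[OF mu, of i] by (auto simp: add_col_def le_Suc_eq)
  then show "contained mu (add_col (Suc L) la) \<longleftrightarrow> contained mu (add_col L la)"
    by (simp add: contained_def)
qed

lemma skew_add_col_box_isolated:
  assumes la: "zero_outside L la" and mu: "zero_outside L mu"
  shows "skew (add_col (Suc L) la) (add_col L mu) = insert (Suc L, 1) (apsnd Suc ` skew la mu)"
    and "contained (add_col L mu) (add_col (Suc L) la) \<longleftrightarrow> contained mu la"
proof -
  show "skew (add_col (Suc L) la) (add_col L mu) = insert (Suc L, 1) (apsnd Suc ` skew la mu)"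
  proof (rule set_eqI, clarify)
    fix i j
    show "(i, j) \<in> skew (add_col (Suc L) la) (add_col L mu)
          \<longleftrightarrow> (i, j) \<in> insert (Suc L, 1) (apsnd Suc ` skew la mu)"
      using zero_outsideD[OF la, of i] zero_outsideD[OF mu, of i]
      by (cases j) (auto simp: mem_skew mem_apsnd_Suc_image add_col_def le_Suc_eq)
  qed
  have "add_col L mu i \<le> add_col (Suc L) la i \<longleftrightarrow> mu i \<le> la i" for i
    using zero_outsideD[OF la, of i] zero_outsideD[OF mu, of i] by (auto simp: add_col_def le_Suc_eq)
  then show "contained (add_col L mu) (add_col (Suc L) la) \<longleftrightarrow> contained mu la"
    by (simp add: contained_def)
qed

lemma not_contained_add_col:
  assumes "zero_outside L la"
  shows "\<not> contained (add_col (Suc L) mu) la"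
proof
  assume "contained (add_col (Suc L) mu) la"
  then have "add_col (Suc L) mu (Suc L) \<le> la (Suc L)" by (simp add: contained_def)
  moreover have "la (Suc L) = 0" using zero_outsideD[OF assms, of "Suc L"] by simp
  ultimately show False by (simp add: add_col_def)
qed

lemma not_broken_rim_hook_add_col_add_col:
  assumes "zero_outside L mu"
  shows "\<not> broken_rim_hook (skew (add_col (Suc (Suc L)) (add_col (Suc (Suc L)) la)) mu)"
proof -
  have "mu (Suc L) = 0" "mu (Suc (Suc L)) = 0"
    using zero_outsideD[OF assms] by auto
  then show ?thesis
    unfolding broken_rim_hook_def
    by (intro notI, elim notE) (rule exI[of _ "Suc L"], rule exI[of _ 1], auto simp: mem_skew add_col_def)
qed

lemma broken_rim_hook_shift: "broken_rim_hook (apsnd Suc ` B) \<longleftrightarrow> broken_rim_hook B"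
  unfolding broken_rim_hook_def mem_apsnd_Suc_image by auto

lemma broken_rim_hook_insert_left:
  assumes "\<forall>q\<in>X. 2 \<le> snd q"
  shows "broken_rim_hook (insert (a, 1) X) \<longleftrightarrow> broken_rim_hook X"
proof
  assume "broken_rim_hook (insert (a, 1) X)"
  then show "broken_rim_hook X" unfolding broken_rim_hook_def by blast
next
  assume X: "broken_rim_hook X"
  show "broken_rim_hook (insert (a, 1) X)"
    unfolding broken_rim_hook_def
  proof (clarify)
    fix i j
    assume sq: "(i, j) \<in> insert (a, 1) X" "(i + 1, j) \<in> insert (a, 1) X"
      "(i, j + 1) \<in> insert (a, 1) X" "(i + 1, j + 1) \<in> insert (a, 1) X"
    have "(i, j) \<in> X"
      using sq(1,2) assms by (auto simp del: One_nat_def)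
    then have "2 \<le> j" using assms by force
    with sq X \<open>(i, j) \<in> X\<close> show False unfolding broken_rim_hook_def by auto
  qed
qed

lemma broken_rim_hook_insert_below:
  assumes "\<forall>q\<in>X. fst q < a \<and> 1 \<le> snd q"
  shows "broken_rim_hook (insert (a, 1) X) \<longleftrightarrow> broken_rim_hook X"
proof
  assume "broken_rim_hook (insert (a, 1) X)"
  then show "broken_rim_hook X" unfolding broken_rim_hook_def by blast
next
  assume X: "broken_rim_hook X"
  show "broken_rim_hook (insert (a, 1) X)"
    unfolding broken_rim_hook_def
  proof (clarify)
    fix i j
    assume sq: "(i, j) \<in> insert (a, 1) X" "(i + 1, j) \<in> insert (a, 1) X"
      "(i, j + 1) \<in> insert (a, 1) X" "(i + 1, j + 1) \<in> insert (a, 1) X"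
    have "(i + 1, j + 1) \<in> X"
      using sq(1,4) assms by (cases j) auto
    then have "i + 1 < a" using assms by force
    with sq X \<open>(i + 1, j + 1) \<in> X\<close> show False unfolding broken_rim_hook_def by auto
  qed
qed

section \<open>Edge-connected components\<close>

definition adjacent :: "nat \<times> nat \<Rightarrow> nat \<times> nat \<Rightarrow> bool" where
  "adjacent p q \<longleftrightarrow> (fst p = fst q \<and> (snd q = snd p + 1 \<or> snd p = snd q + 1)) \<or>
                     (snd p = snd q \<and> (fst q = fst p + 1 \<or> fst p = fst q + 1))"

lemma adjacent_sym: "adjacent p q \<longleftrightarrow> adjacent q p"
  by (auto simp: adjacent_def)

lemma not_adjacent_self [simp]: "\<not> adjacent p p"
  by (auto simp: adjacent_def)

lemma mem_adj_in: "(x, y) \<in> adj_in b \<longleftrightarrow> x \<in> b \<and> y \<in> b \<and> adjacent x y"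
  by (cases x; cases y) (auto simp: adj_in_def adjacent_def)

definition component :: "(nat \<times> nat) set \<Rightarrow> nat \<times> nat \<Rightarrow> (nat \<times> nat) set" where
  "component b x = {y \<in> b. (x, y) \<in> (adj_in b)\<^sup>*}"

lemma components_eq_image: "components b = component b ` b"
  by (auto simp: components_def component_def)

lemma finite_components: "finite b \<Longrightarrow> finite (components b)"
  by (simp add: components_eq_image)

lemma component_subset: "component b x \<subseteq> b"
  by (auto simp: component_def)

lemma components_subset: "C \<in> components b \<Longrightarrow> C \<subseteq> b"
  by (auto simp: components_eq_image component_def)

lemma mem_component_self: "x \<in> b \<Longrightarrow> x \<in> component b x"
  by (simp add: component_def)

lemma component_eq:
  assumes "y \<in> component b x"
  shows "component b y = component b x"
proof -
  have "sym (adj_in b)"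
    by (auto simp: sym_def mem_adj_in adjacent_sym)
  moreover have xy: "(x, y) \<in> (adj_in b)\<^sup>*"
    using assms by (simp add: component_def)
  ultimately have "(y, x) \<in> (adj_in b)\<^sup>*"
    by (meson sym_rtrancl symD)
  with xy show ?thesis
    unfolding component_def by (meson rtrancl_trans)
qed

lemma rtrancl_map_prod_inj:
  assumes "inj f"
  shows "(f x, f y) \<in> (map_prod f f ` R)\<^sup>* \<longleftrightarrow> (x, y) \<in> R\<^sup>*"
proof
  have "(u, v) \<in> (map_prod f f ` R)\<^sup>* \<Longrightarrow> u = f x \<Longrightarrow> \<exists>y'. v = f y' \<and> (x, y') \<in> R\<^sup>*" for u v
  proof (induction rule: rtrancl_induct)
    case (step v w)
    then obtain y' a c where "v = f y'" "(x, y') \<in> R\<^sup>*" "(a, c) \<in> R" "v = f a" "w = f c"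
      by auto
    with assms show ?case by (metis injD rtrancl.rtrancl_into_rtrancl)
  qed auto
  then show "(f x, f y) \<in> (map_prod f f ` R)\<^sup>* \<Longrightarrow> (x, y) \<in> R\<^sup>*"
    using assms by (metis injD)
next
  show "(x, y) \<in> R\<^sup>* \<Longrightarrow> (f x, f y) \<in> (map_prod f f ` R)\<^sup>*"
  proof (induction rule: rtrancl_induct)
    case (step y z)
    then have "(f y, f z) \<in> map_prod f f ` R" by force
    with step show ?case by (meson rtrancl.rtrancl_into_rtrancl)
  qed simp
qed

lemma components_image:
  assumes f: "inj f" and adj: "\<And>p q. adjacent (f p) (f q) \<longleftrightarrow> adjacent p q"
  shows "components (f ` B) = (\<lambda>C. f ` C) ` components B"
proof -
  have "adj_in (f ` B) = map_prod f f ` adj_in B"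
  proof (rule set_eqI, clarify)
    fix u v
    show "(u, v) \<in> adj_in (f ` B) \<longleftrightarrow> (u, v) \<in> map_prod f f ` adj_in B"
    proof
      assume "(u, v) \<in> adj_in (f ` B)"
      then obtain x y where "u = f x" "v = f y" "x \<in> B" "y \<in> B" "adjacent x y"
        by (auto simp: mem_adj_in adj)
      then show "(u, v) \<in> map_prod f f ` adj_in B"
        by (auto simp: mem_adj_in intro!: image_eqI[where x = "(x, y)"])
    qed (auto simp: mem_adj_in adj)
  qed
  then have reach: "(f x, f y) \<in> (adj_in (f ` B))\<^sup>* \<longleftrightarrow> (x, y) \<in> (adj_in B)\<^sup>*" for x y
    using rtrancl_map_prod_inj[OF f, of x y "adj_in B"] by simp
  have "component (f ` B) (f x) = f ` component B x" for x
  proof -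
    have "{z \<in> f ` B. (f x, z) \<in> (adj_in (f ` B))\<^sup>*} = f ` {y \<in> B. (f x, f y) \<in> (adj_in (f ` B))\<^sup>*}"
      by auto
    then show ?thesis
      unfolding component_def reach .
  qed
  then show ?thesis
    unfolding components_eq_image by (auto simp: image_image)
qed

locale attached_box =
  fixes p q0 :: "nat \<times> nat" and B :: "(nat \<times> nat) set"
  assumes p_notin: "p \<notin> B" and q0_in: "q0 \<in> B" and adjacent_p_q0: "adjacent p q0"
    and unique_neighbour: "\<And>q. q \<in> B \<Longrightarrow> adjacent p q \<Longrightarrow> q = q0"
begin

lemma reachable_from_B_iff:
  assumes "x \<in> B"
  shows "(x, z) \<in> (adj_in (insert p B))\<^sup>* \<longleftrightarrow>
           (z \<in> B \<and> (x, z) \<in> (adj_in B)\<^sup>*) \<or> (z = p \<and> (x, q0) \<in> (adj_in B)\<^sup>*)"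
proof
  assume "(x, z) \<in> (adj_in (insert p B))\<^sup>*"
  then show "(z \<in> B \<and> (x, z) \<in> (adj_in B)\<^sup>*) \<or> (z = p \<and> (x, q0) \<in> (adj_in B)\<^sup>*)"
  proof (induction rule: rtrancl_induct)
    case (step y z)
    then have z: "z \<in> insert p B" "adjacent y z"
      by (auto simp: mem_adj_in)
    from step.IH show ?case
    proof
      assume y: "y \<in> B \<and> (x, y) \<in> (adj_in B)\<^sup>*"
      show ?thesis
      proof (cases "z = p")
        case True
        then have "y = q0"
          using unique_neighbour y z adjacent_sym by blast
        with y True show ?thesis by simp
      next
        case False
        with y z have "(y, z) \<in> adj_in B"
          by (simp add: mem_adj_in)
        then have "z \<in> B" "(x, z) \<in> (adj_in B)\<^sup>*"
          using y rtrancl.rtrancl_into_rtrancl[of x y "adj_in B" z] by (simp_all add: mem_adj_in)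
        then show ?thesis by simp
      qed
    next
      assume y: "y = p \<and> (x, q0) \<in> (adj_in B)\<^sup>*"
      with z have "z = q0"
        using unique_neighbour[of z] by auto
      with y q0_in show ?thesis by simp
    qed
  qed (simp add: assms)
next
  have mono: "(adj_in B)\<^sup>* \<subseteq> (adj_in (insert p B))\<^sup>*"
    by (intro rtrancl_mono) (auto simp: mem_adj_in)
  have "(q0, p) \<in> adj_in (insert p B)"
    using adjacent_p_q0 q0_in adjacent_sym by (simp add: mem_adj_in)
  then show "(z \<in> B \<and> (x, z) \<in> (adj_in B)\<^sup>*) \<or> (z = p \<and> (x, q0) \<in> (adj_in B)\<^sup>*)
      \<Longrightarrow> (x, z) \<in> (adj_in (insert p B))\<^sup>*"
    using mono by (auto intro: rtrancl.rtrancl_into_rtrancl)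
qed

lemma reachable_from_p_iff:
  "(p, z) \<in> (adj_in (insert p B))\<^sup>* \<longleftrightarrow> z = p \<or> (z \<in> B \<and> (q0, z) \<in> (adj_in B)\<^sup>*)"
proof
  assume "(p, z) \<in> (adj_in (insert p B))\<^sup>*"
  then show "z = p \<or> (z \<in> B \<and> (q0, z) \<in> (adj_in B)\<^sup>*)"
  proof (cases rule: converse_rtranclE)
    case (step y)
    then have "y = q0"
      using unique_neighbour[of y] by (auto simp: mem_adj_in)
    with step(2) show ?thesis
      using reachable_from_B_iff[OF q0_in] by auto
  qed simp
next
  have mono: "(adj_in B)\<^sup>* \<subseteq> (adj_in (insert p B))\<^sup>*"
    by (intro rtrancl_mono) (auto simp: mem_adj_in)
  have "(p, q0) \<in> adj_in (insert p B)"
    using adjacent_p_q0 q0_in by (simp add: mem_adj_in)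
  then show "z = p \<or> (z \<in> B \<and> (q0, z) \<in> (adj_in B)\<^sup>*) \<Longrightarrow> (p, z) \<in> (adj_in (insert p B))\<^sup>*"
    using mono by (auto intro: converse_rtrancl_into_rtrancl)
qed

lemma component_insert_B:
  "x \<in> B \<Longrightarrow> component (insert p B) x
     = (if q0 \<in> component B x then insert p (component B x) else component B x)"
  using reachable_from_B_iff q0_in p_notin by (auto simp: component_def)

lemma component_insert_p: "component (insert p B) p = insert p (component B q0)"
  using reachable_from_p_iff by (auto simp: component_def)

lemma components_insert:
  "components (insert p B) = insert (insert p (component B q0)) (components B - {component B q0})"
proof -
  have eq: "q0 \<in> component B x \<longleftrightarrow> component B x = component B q0" if "x \<in> B" for x
    using component_eq[of q0 B x] mem_component_self[OF q0_in] by metis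
  have "component (insert p B) ` insert p B = insert (component (insert p B) p) (component (insert p B) ` B)"
    by simp
  also have "component (insert p B) ` B = (\<lambda>x. if component B x = component B q0 then insert p (component B q0) else component B x) ` B"
    using component_insert_B eq by (intro image_cong) auto
  finally have comps: "components (insert p B) = insert (insert p (component B q0))
      ((\<lambda>x. if component B x = component B q0 then insert p (component B q0) else component B x) ` B)"
    unfolding components_eq_image component_insert_p .
  show ?thesis
  proof (rule set_eqI)
    fix C
    show "C \<in> components (insert p B) \<longleftrightarrow> C \<in> insert (insert p (component B q0)) (components B - {component B q0})"
      by (subst comps) (auto simp: components_eq_image image_iff)
  qed
qed

lemma sum_components_insert:
  assumes "finite B"
  shows "sum f (components (insert p B)) + f (component B q0)
           = sum f (components B) + f (insert p (component B q0))"
    and "card (components (insert p B)) = card (components B)"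
proof -
  have fin: "finite (components B)" and C0: "component B q0 \<in> components B"
    using assms q0_in by (simp_all add: finite_components components_eq_image)
  have new: "insert p (component B q0) \<notin> components B - {component B q0}"
    using p_notin components_subset by blast
  show "sum f (components (insert p B)) + f (component B q0)
          = sum f (components B) + f (insert p (component B q0))"
    unfolding components_insert using fin new sum.remove[OF fin C0, of f] by (simp add: ac_simps)
  have "card (components (insert p B)) = Suc (card (components B - {component B q0}))"
    unfolding components_insert using fin new by (intro card_insert_disjoint) auto
  also have "\<dots> = card (components B)"
    using card_Suc_Diff1[OF fin C0] .
  finally show "card (components (insert p B)) = card (components B)" .
qed

end

lemma components_insert_isolated:
  assumes p: "p \<notin> B" and isolated: "\<And>q. q \<in> B \<Longrightarrow> \<not> adjacent p q"
  shows "components (insert p B) = insert {p} (components B)"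
proof -
  have adj: "adj_in (insert p B) = adj_in B"
    using isolated adjacent_sym by (fastforce simp: mem_adj_in)
  have from_p: "(p, z) \<in> (adj_in B)\<^sup>* \<Longrightarrow> z = p" and to_p: "(z, p) \<in> (adj_in B)\<^sup>* \<Longrightarrow> z = p" for z
    using p by (auto elim: converse_rtranclE rtranclE simp: mem_adj_in)
  have "component (insert p B) x = component B x" if "x \<in> B" for x
  proof -
    have "(x, p) \<notin> (adj_in B)\<^sup>*"
      using to_p[of x] that p by blast
    then show ?thesis
      unfolding component_def adj by auto
  qed
  moreover have "component (insert p B) p = {p}"
    using from_p unfolding component_def adj by auto
  ultimately show ?thesis
    unfolding components_eq_image by auto
qed

section \<open>The exponent vector of \<Omega>\<close>

definition Omega_exp :: "nat \<Rightarrow> nat \<Rightarrow> (nat \<times> nat) set \<Rightarrow> nat \<Rightarrow> nat" where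
  "Omega_exp l n b i =
     (if i = 1 then cbar l n b else if i = 2 then (\<Sum>h\<in>components b. nrows h - 1)
      else if i = 3 then rbar l b else if i = 4 then (\<Sum>h\<in>components b. ncols h - 1)
      else if i = 5 \<or> i = 6 then card (components b) else 0)"

definition unit_exp :: "nat \<Rightarrow> nat \<Rightarrow> nat" where
  "unit_exp k i = of_bool (i = k)"

lemma Omega_gen_eq_prod: "Omega_gen w l n b = (\<Prod>i\<in>{1..6}. w i ^ Omega_exp l n b i)"
proof -
  have "{1..6 :: nat} = {1, 2, 3, 4, 5, 6}" by auto
  moreover have "(\<Prod>h\<in>components b. w 2 ^ (nrows h - 1) * w 4 ^ (ncols h - 1))
      = w 2 ^ (\<Sum>h\<in>components b. nrows h - 1) * w 4 ^ (\<Sum>h\<in>components b. ncols h - 1)"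
    by (simp add: prod.distrib power_sum)
  ultimately show ?thesis
    by (simp add: Omega_gen_def Omega_exp_def power_mult_distrib ac_simps)
qed

lemma prod_power_add_exp:
  "(\<Prod>i\<in>I. w i ^ (e i + d i)) = (\<Prod>i\<in>I. w i ^ d i) * (\<Prod>i\<in>I. (w i :: 'a :: comm_monoid_mult) ^ e i)"
  by (simp add: power_add prod.distrib mult.commute)

lemma prod_power_unit_exp: "finite I \<Longrightarrow> k \<in> I \<Longrightarrow> (\<Prod>i\<in>I. w i ^ unit_exp k i) = w k"
  by (simp add: unit_exp_def of_bool_def if_distrib cong: if_cong)

lemma nrows_shift: "nrows (apsnd Suc ` h) = nrows h"
  by (simp add: nrows_def image_image)

lemma ncols_shift: "ncols (apsnd Suc ` h) = ncols h"
proof -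
  have "snd ` apsnd Suc ` h = Suc ` snd ` h" by (force simp: image_iff)
  then show ?thesis by (simp add: ncols_def card_image)
qed

lemma components_shift: "components (apsnd Suc ` S) = (\<lambda>C. apsnd Suc ` C) ` components S"
  by (rule components_image) (auto simp: adjacent_def)

lemma inj_on_image_apsnd_Suc: "inj_on (\<lambda>C. apsnd Suc ` C) X"
  by (meson inj_image_eq_iff inj_onI inj_apsnd inj_Suc)

lemma card_components_shift: "card (components (apsnd Suc ` S)) = card (components S)"
  unfolding components_shift by (rule card_image[OF inj_on_image_apsnd_Suc])

lemma sum_components_shift:
  assumes "\<And>h. f (apsnd Suc ` h) = f h"
  shows "sum f (components (apsnd Suc ` S)) = sum f (components S)"
  unfolding components_shift by (simp add: sum.reindex[OF inj_on_image_apsnd_Suc] assms)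

lemma rbar_shift: "rbar l (apsnd Suc ` S) = rbar l S"
  unfolding rbar_def by (simp add: mem_apsnd_Suc_image)

lemma cbar_shift:
  assumes "\<forall>q\<in>S. 1 \<le> snd q" "l \<le> n"
  shows "cbar l (Suc n) (apsnd Suc ` S) = Suc (cbar l n S)"
proof -
  let ?E = "{j \<in> {1..n - l}. \<forall>i. (i, j) \<notin> S}"
  have "{j \<in> {1..Suc n - l}. \<forall>i. (i, j) \<notin> apsnd Suc ` S} = insert 1 (Suc ` ?E)"
  proof (rule set_eqI)
    fix j
    show "j \<in> {j \<in> {1..Suc n - l}. \<forall>i. (i, j) \<notin> apsnd Suc ` S} \<longleftrightarrow> j \<in> insert 1 (Suc ` ?E)"
      using assms by (cases j) (auto simp: mem_apsnd_Suc_image Suc_diff_le)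
  qed
  moreover have "1 \<notin> Suc ` ?E" by auto
  ultimately show ?thesis
    unfolding cbar_def by (simp add: card_image)
qed

lemma cbar_Suc_Suc: "cbar (Suc l) (Suc n) b = cbar l n b"
  by (simp add: cbar_def)

lemma cbar_insert_shift:
  assumes "\<forall>q\<in>S. 1 \<le> snd q" "l \<le> n"
  shows "cbar l (Suc n) (insert (i, 1) (apsnd Suc ` S)) = cbar l n S"
proof -
  have "{j \<in> {1..Suc n - l}. \<forall>i'. (i', j) \<notin> insert (i, 1) (apsnd Suc ` S)}
      = Suc ` {j \<in> {1..n - l}. \<forall>i'. (i', j) \<notin> S}" (is "?A = ?B")
  proof (rule set_eqI)
    fix j
    consider "j = 0" | "j = 1" | k where "j = Suc (Suc k)"
      by (metis One_nat_def not0_implies_Suc)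
    then show "j \<in> ?A \<longleftrightarrow> j \<in> ?B"
      using assms(2) by cases (force simp: mem_apsnd_Suc_image Suc_diff_le image_iff)+
  qed
  then show ?thesis
    unfolding cbar_def by (simp add: card_image)
qed

lemma rbar_insert_occupied_row: "(i, j') \<in> S \<Longrightarrow> rbar l (insert (i, j) S) = rbar l S"
  unfolding rbar_def by (auto intro!: arg_cong[where f = card])

lemma rbar_insert_new_row:
  "\<forall>q\<in>S. fst q \<le> l \<Longrightarrow> rbar (Suc l) (insert (Suc l, j) S) = rbar l S"
  unfolding rbar_def by (auto simp: le_Suc_eq intro!: arg_cong[where f = card])

lemma Omega_exp_shift:
  assumes "\<forall>q\<in>S. 1 \<le> snd q" "l \<le> n"
  shows "Omega_exp l (Suc n) (apsnd Suc ` S) = Omega_exp l n S + unit_exp 1"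
  using assms
  by (intro ext) (simp add: Omega_exp_def unit_exp_def cbar_shift rbar_shift card_components_shift
      sum_components_shift nrows_shift ncols_shift)

lemma Omega_exp_new_row:
  assumes "\<forall>q\<in>S. fst q \<le> l"
  shows "Omega_exp (Suc l) (Suc n) S = Omega_exp l n S + unit_exp 3"
proof -
  have "{i \<in> {1..Suc l}. \<forall>j. (i, j) \<notin> S} = insert (Suc l) {i \<in> {1..l}. \<forall>j. (i, j) \<notin> S}"
    using assms by (force simp: le_Suc_eq)
  then have "rbar (Suc l) S = Suc (rbar l S)"
    unfolding rbar_def by simp
  then show ?thesis
    by (intro ext) (simp add: Omega_exp_def unit_exp_def cbar_Suc_Suc)
qed

lemma Omega_exp_box_left:
  assumes fin: "finite S" and L1: "(L, 1) \<in> S"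
    and bnd: "\<forall>q\<in>S. 1 \<le> snd q \<and> fst q \<le> L" and Ln: "L \<le> n"
  shows "Omega_exp L (Suc n) (insert (L, 1) (apsnd Suc ` S)) = Omega_exp L n S + unit_exp 4"
proof -
  let ?X = "apsnd Suc ` S"
  interpret attached_box "(L, 1)" "(L, 2)" ?X
  proof
    show "(L, 1) \<notin> ?X" using bnd by (force simp: mem_apsnd_Suc_image)
    show "(L, 2) \<in> ?X" using L1 by (simp add: mem_apsnd_Suc_image numeral_2_eq_2)
    show "adjacent (L, 1) (L, 2)" by (simp add: adjacent_def)
    fix q assume "q \<in> ?X" "adjacent (L, 1) q"
    then show "q = (L, 2)" using bnd by (cases q) (auto simp: adjacent_def mem_apsnd_Suc_image)
  qed
  let ?C0 = "component ?X (L, 2)"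
  have "finite ?C0"
    using fin component_subset finite_subset by blast
  moreover have "(L, 2) \<in> ?C0" "1 \<notin> snd ` ?C0"
    using mem_component_self[OF q0_in] component_subset bnd by (force simp: mem_apsnd_Suc_image)+
  ultimately have "nrows (insert (L, 1) ?C0) = nrows ?C0"
    and "ncols (insert (L, 1) ?C0) = Suc (ncols ?C0)" "0 < ncols ?C0"
    unfolding nrows_def ncols_def by (simp_all add: insert_absorb rev_image_eqI card_gt_0_iff) blast
  then have "(\<Sum>h\<in>components (insert (L, 1) ?X). nrows h - 1) = (\<Sum>h\<in>components S. nrows h - 1)"
    "(\<Sum>h\<in>components (insert (L, 1) ?X). ncols h - 1) = Suc (\<Sum>h\<in>components S. ncols h - 1)"
    using sum_components_insert(1)[of "\<lambda>h. nrows h - 1"] sum_components_insert(1)[of "\<lambda>h. ncols h - 1"]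
      fin sum_components_shift[of "\<lambda>h. nrows h - 1"] sum_components_shift[of "\<lambda>h. ncols h - 1"]
    by (simp_all add: nrows_shift ncols_shift)
  moreover have "card (components (insert (L, 1) ?X)) = card (components S)"
    using sum_components_insert(2) fin card_components_shift by simp
  moreover have "cbar L (Suc n) (insert (L, 1) ?X) = cbar L n S"
    using bnd by (intro cbar_insert_shift[OF _ Ln]) blast
  moreover have "rbar L (insert (L, 1) ?X) = rbar L S"
    using rbar_insert_occupied_row[OF q0_in] rbar_shift by simp
  ultimately show ?thesis
    by (intro ext) (simp add: Omega_exp_def unit_exp_def)
qed

lemma Omega_exp_box_below:
  assumes fin: "finite S" and L1: "(L, 1) \<in> S" and bnd: "\<forall>q\<in>S. 1 \<le> snd q \<and> fst q \<le> L"
  shows "Omega_exp (Suc L) (Suc n) (insert (Suc L, 1) S) = Omega_exp L n S + unit_exp 2"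
proof -
  interpret attached_box "(Suc L, 1)" "(L, 1)" S
  proof
    show "(Suc L, 1) \<notin> S" using bnd by force
    show "(L, 1) \<in> S" by (rule L1)
    show "adjacent (Suc L, 1) (L, 1)" by (simp add: adjacent_def)
    fix q assume "q \<in> S" "adjacent (Suc L, 1) q"
    then show "q = (L, 1)" using bnd by (cases q) (force simp: adjacent_def)
  qed
  let ?C0 = "component S (L, 1)"
  have "finite ?C0"
    using fin component_subset finite_subset by blast
  moreover have "(L, 1) \<in> ?C0" "Suc L \<notin> fst ` ?C0"
    using mem_component_self[OF q0_in] component_subset bnd by force+
  ultimately have "ncols (insert (Suc L, 1) ?C0) = ncols ?C0"
    and "nrows (insert (Suc L, 1) ?C0) = Suc (nrows ?C0)" "0 < nrows ?C0"
    unfolding nrows_def ncols_def by (simp_all add: insert_absorb rev_image_eqI card_gt_0_iff) blast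
  then have "(\<Sum>h\<in>components (insert (Suc L, 1) S). ncols h - 1) = (\<Sum>h\<in>components S. ncols h - 1)"
    "(\<Sum>h\<in>components (insert (Suc L, 1) S). nrows h - 1) = Suc (\<Sum>h\<in>components S. nrows h - 1)"
    using sum_components_insert(1)[of "\<lambda>h. nrows h - 1"] sum_components_insert(1)[of "\<lambda>h. ncols h - 1"] fin
    by simp_all
  moreover have "card (components (insert (Suc L, 1) S)) = card (components S)"
    using sum_components_insert(2) fin by simp
  moreover have "cbar (Suc L) (Suc n) (insert (Suc L, 1) S) = cbar L n S"
    unfolding cbar_def using L1 by (auto intro!: arg_cong[where f = card])
  moreover have "rbar (Suc L) (insert (Suc L, 1) S) = rbar L S"
    using bnd by (simp add: rbar_insert_new_row)
  ultimately show ?thesis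
    by (intro ext) (simp add: Omega_exp_def unit_exp_def)
qed

lemma Omega_exp_box_isolated:
  assumes fin: "finite S" and bnd: "\<forall>q\<in>S. 1 \<le> snd q \<and> fst q \<le> L" and Ln: "L \<le> n"
  shows "Omega_exp (Suc L) (Suc (Suc n)) (insert (Suc L, 1) (apsnd Suc ` S))
           = Omega_exp L n S + unit_exp 5 + unit_exp 6"
proof -
  let ?X = "apsnd Suc ` S"
  have comps: "components (insert (Suc L, 1) ?X) = insert {(Suc L, 1)} (components ?X)"
    using bnd by (intro components_insert_isolated) (force simp: mem_apsnd_Suc_image adjacent_def)+
  have new: "{(Suc L, 1)} \<notin> components ?X"
    using components_subset bnd by (force simp: mem_apsnd_Suc_image)
  have "finite (components ?X)"
    using fin by (simp add: finite_components)
  with new have "card (components (insert (Suc L, 1) ?X)) = Suc (card (components S))"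
    "(\<Sum>h\<in>components (insert (Suc L, 1) ?X). nrows h - 1) = (\<Sum>h\<in>components S. nrows h - 1)"
    "(\<Sum>h\<in>components (insert (Suc L, 1) ?X). ncols h - 1) = (\<Sum>h\<in>components S. ncols h - 1)"
    unfolding comps by (simp_all add: card_components_shift sum_components_shift nrows_shift ncols_shift,
        simp_all add: nrows_def ncols_def)
  moreover have "cbar (Suc L) (Suc (Suc n)) (insert (Suc L, 1) ?X) = cbar L n S"
    unfolding cbar_Suc_Suc using bnd by (intro cbar_insert_shift[OF _ Ln]) blast
  moreover have "rbar (Suc L) (insert (Suc L, 1) ?X) = rbar L S"
    using bnd rbar_shift by (simp add: rbar_insert_new_row mem_apsnd_Suc_image)
  ultimately show ?thesis
    by (intro ext) (simp add: Omega_exp_def unit_exp_def)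
qed

section \<open>Pairs of strings\<close>

definition admissible :: "nat list \<Rightarrow> nat list \<Rightarrow> bool" where
  "admissible t s \<longleftrightarrow> ones t = ones s \<and> contained (label s) (label t)
     \<and> broken_rim_hook (skew (label t) (label s))"

definition pair_exp :: "nat list \<Rightarrow> nat list \<Rightarrow> nat \<Rightarrow> nat" where
  "pair_exp t s = Omega_exp (ones t) (length t) (skew (label t) (label s))"

definition transition ::
    "nat list \<Rightarrow> nat list \<Rightarrow> nat list \<Rightarrow> nat list \<Rightarrow> (nat \<Rightarrow> nat) \<Rightarrow> nat \<Rightarrow> bool" where
  "transition t' s' t s d k \<longleftrightarrow> (admissible t' s' \<longleftrightarrow> admissible t s) \<and>
     (admissible t s \<longrightarrow> pair_exp t' s' = pair_exp t s + d \<and>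
        card (skew (label t') (label s')) = card (skew (label t) (label s)) + k)"

lemma skew_label_bounds:
  "q \<in> skew (label t) mu \<Longrightarrow> 1 \<le> snd q \<and> fst q \<le> ones t"
  using skew_bounds(2,3)[OF zero_outside_label] by blast

lemma transition_add_col: "transition (0 # t) (0 # s) t s (unit_exp 1) 0"
proof (cases "ones t = ones s")
  case True
  define L where "L = ones t"
  have L: "ones t = L" "ones s = L"
    using True by (simp_all add: L_def)
  let ?S = "skew (label t) (label s)"
  have la: "zero_outside L (label t)" and mu: "zero_outside L (label s)"
    using zero_outside_label L by metis+
  have "pair_exp (0 # t) (0 # s) = pair_exp t s + unit_exp 1"
    using skew_label_bounds[of _ t] ones_le_length[of t]
    by (simp add: pair_exp_def L skew_add_col_add_col[OF la mu] Omega_exp_shift)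
  moreover have "card (apsnd Suc ` ?S) = card ?S"
    by (simp add: card_image inj_on_subset[OF _ subset_UNIV])
  ultimately show ?thesis
    by (simp add: transition_def admissible_def L skew_add_col_add_col[OF la mu]
        broken_rim_hook_shift)
qed (simp add: transition_def admissible_def)

lemma transition_new_row: "transition (1 # t) (1 # s) t s (unit_exp 3) 0"
proof -
  have "Omega_exp (Suc (ones t)) (Suc (length t)) (skew (label t) (label s))
      = Omega_exp (ones t) (length t) (skew (label t) (label s)) + unit_exp 3"
    using skew_label_bounds[of _ t] by (simp add: Omega_exp_new_row)
  then show ?thesis
    by (auto simp: transition_def admissible_def pair_exp_def)
qed

lemma card_insert_shift:
  assumes "finite S" "\<forall>q\<in>S. 1 \<le> snd q"
  shows "card (insert (i, 1) (apsnd Suc ` S)) = Suc (card S)"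
proof -
  have "(i, 1) \<notin> apsnd Suc ` S"
    using assms(2) by (force simp: mem_apsnd_Suc_image)
  moreover have "card (apsnd Suc ` S) = card S"
    by (simp add: card_image inj_on_subset[OF _ subset_UNIV])
  ultimately show ?thesis
    using assms(1) by simp
qed

lemma transition_box_left: "transition (0 # 0 # t) (1 # 0 # s) (0 # t) (1 # s) (unit_exp 4) 1"
proof (cases "ones t = Suc (ones s)")
  case True
  define M where "M = ones s"
  have cnt: "ones t = Suc M" "ones s = M"
    using True by (simp_all add: M_def)
  have la: "zero_outside (Suc M) (label t)" and mu: "zero_outside M (label s)"
    using zero_outside_label cnt by metis+
  let ?S = "skew (add_col (Suc M) (label t)) (label s)"
  have bnd: "\<forall>q\<in>?S. 1 \<le> snd q \<and> fst q \<le> Suc M"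
    using skew_bounds(2,3)[OF zero_outside_add_col] by blast
  have fin: "finite ?S"
    by (rule finite_skew[OF zero_outside_add_col])
  have "(Suc M, 1) \<in> ?S"
    using zero_outsideD[OF mu, of "Suc M"] by (simp add: mem_skew add_col_def)
  moreover have "Suc M \<le> Suc (length t)"
    using ones_le_length[of t] cnt by simp
  ultimately have "Omega_exp (Suc M) (Suc (Suc (length t))) (insert (Suc M, 1) (apsnd Suc ` ?S))
      = Omega_exp (Suc M) (Suc (length t)) ?S + unit_exp 4"
    using Omega_exp_box_left[OF fin _ bnd] by blast
  then have "pair_exp (0 # 0 # t) (1 # 0 # s) = pair_exp (0 # t) (1 # s) + unit_exp 4"
    using cnt by (simp add: pair_exp_def skew_add_col_box_left[OF la mu])
  moreover have "broken_rim_hook (insert (Suc M, 1) (apsnd Suc ` ?S)) \<longleftrightarrow> broken_rim_hook ?S"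
    using bnd by (subst broken_rim_hook_insert_left) (auto simp: broken_rim_hook_shift)
  moreover have "card (insert (Suc M, 1) (apsnd Suc ` ?S)) = Suc (card ?S)"
    using bnd by (intro card_insert_shift[OF fin]) blast
  ultimately show ?thesis
    using cnt by (simp add: transition_def admissible_def skew_add_col_box_left[OF la mu])
qed (auto simp: transition_def admissible_def)

lemma transition_box_below: "transition (0 # 1 # t) (1 # 1 # s) (0 # t) (1 # s) (unit_exp 2) 1"
proof (cases "ones t = Suc (ones s)")
  case True
  define M where "M = ones s"
  have cnt: "ones t = Suc M" "ones s = M"
    using True by (simp_all add: M_def)
  have la: "zero_outside (Suc M) (label t)" and mu': "zero_outside M (label s)"
    using zero_outside_label cnt by metis+
  then have mu: "zero_outside (Suc M) (label s)"
    by (simp add: zero_outside_mono)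
  let ?S = "skew (add_col (Suc M) (label t)) (label s)"
  have bnd: "\<forall>q\<in>?S. 1 \<le> snd q \<and> fst q \<le> Suc M"
    using skew_bounds(2,3)[OF zero_outside_add_col] by blast
  have fin: "finite ?S"
    by (rule finite_skew[OF zero_outside_add_col])
  have "(Suc M, 1) \<in> ?S"
    using zero_outsideD[OF mu', of "Suc M"] by (simp add: mem_skew add_col_def)
  then have "Omega_exp (Suc (Suc M)) (Suc (Suc (length t))) (insert (Suc (Suc M), 1) ?S)
      = Omega_exp (Suc M) (Suc (length t)) ?S + unit_exp 2"
    using Omega_exp_box_below[OF fin _ bnd] by blast
  then have "pair_exp (0 # 1 # t) (1 # 1 # s) = pair_exp (0 # t) (1 # s) + unit_exp 2"
    using cnt by (simp add: pair_exp_def skew_add_col_box_below[OF la mu])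
  moreover have "broken_rim_hook (insert (Suc (Suc M), 1) ?S) \<longleftrightarrow> broken_rim_hook ?S"
    using bnd by (intro broken_rim_hook_insert_below) auto
  moreover have "card (insert (Suc (Suc M), 1) ?S) = Suc (card ?S)"
    using fin bnd by (subst card_insert_disjoint) auto
  ultimately show ?thesis
    using cnt by (simp add: transition_def admissible_def skew_add_col_box_below[OF la mu])
qed (auto simp: transition_def admissible_def)

lemma transition_box_isolated: "transition (0 # 1 # t) (1 # 0 # s) t s (unit_exp 5 + unit_exp 6) 1"
proof (cases "ones t = ones s")
  case True
  define L where "L = ones t"
  have cnt: "ones t = L" "ones s = L"
    using True by (simp_all add: L_def)
  have la: "zero_outside L (label t)" and mu: "zero_outside L (label s)"
    using zero_outside_label cnt by metis+
  let ?S = "skew (label t) (label s)"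
  have bnd: "\<forall>q\<in>?S. 1 \<le> snd q \<and> fst q \<le> L"
    using skew_bounds(2,3)[OF la] by blast
  have fin: "finite ?S"
    by (rule finite_skew[OF la])
  have "L \<le> length t"
    using ones_le_length[of t] cnt by simp
  then have "Omega_exp (Suc L) (Suc (Suc (length t))) (insert (Suc L, 1) (apsnd Suc ` ?S))
      = Omega_exp L (length t) ?S + unit_exp 5 + unit_exp 6"
    by (rule Omega_exp_box_isolated[OF fin bnd])
  then have "pair_exp (0 # 1 # t) (1 # 0 # s) = pair_exp t s + (unit_exp 5 + unit_exp 6)"
    using cnt by (simp add: pair_exp_def skew_add_col_box_isolated[OF la mu] add.assoc)
  moreover have "broken_rim_hook (insert (Suc L, 1) (apsnd Suc ` ?S)) \<longleftrightarrow> broken_rim_hook ?S"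
    using bnd by (subst broken_rim_hook_insert_left) (auto simp: broken_rim_hook_shift)
  moreover have "card (insert (Suc L, 1) (apsnd Suc ` ?S)) = Suc (card ?S)"
    using bnd by (intro card_insert_shift[OF fin]) blast
  ultimately show ?thesis
    using cnt by (simp add: transition_def admissible_def skew_add_col_box_isolated[OF la mu])
qed (auto simp: transition_def admissible_def)

lemma not_admissible_1_0: "\<not> admissible (1 # t) (0 # s)"
proof (cases "Suc (ones t) = ones s")
  case True
  then show ?thesis
    using not_contained_add_col[OF zero_outside_label[of t]] by (simp add: admissible_def)
qed (simp add: admissible_def)

lemma not_admissible_00_11: "\<not> admissible (0 # 0 # t) (1 # 1 # s)"
proof (cases "ones t = Suc (Suc (ones s))")
  case True
  then show ?thesis
    using not_broken_rim_hook_add_col_add_col[OF zero_outside_label[of s]] by (simp add: admissible_def)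
qed (simp add: admissible_def)

lemma not_admissible_0_1: "\<not> admissible [0] [1]"
  by (simp add: admissible_def)

lemma admissible_Nil: "admissible [] []" "pair_exp [] [] = 0" "skew (label []) (label []) = {}"
  by (auto simp: admissible_def pair_exp_def label_Nil contained_def broken_rim_hook_def
      skew_def Omega_exp_def cbar_def rbar_def components_def)

definition skew_weight :: "(nat \<Rightarrow> mpoly) \<Rightarrow> nat list \<Rightarrow> nat list \<Rightarrow> mpoly" where
  "skew_weight w t s =
     (if admissible t s then Omega_gen w (ones t) (length t) (skew (label t) (label s)) else 0)"

lemma skew_weight_transition:
  assumes "transition t' s' t s d k"
  shows "skew_weight w t' s' = (\<Prod>i\<in>{1..6}. w i ^ d i) * skew_weight w t s"
  using assms
  by (auto simp: transition_def skew_weight_def Omega_gen_eq_prod pair_exp_def[symmetric]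
      prod_power_add_exp)

lemma skew_weight_Cons:
  "skew_weight w (0 # t) (0 # s) = w 1 * skew_weight w t s"
  "skew_weight w (1 # t) (1 # s) = w 3 * skew_weight w t s"
  "skew_weight w (1 # t) (0 # s) = 0"
  "skew_weight w (0 # 0 # t) (1 # 0 # s) = w 4 * skew_weight w (0 # t) (1 # s)"
  "skew_weight w (0 # 1 # t) (1 # 1 # s) = w 2 * skew_weight w (0 # t) (1 # s)"
  "skew_weight w (0 # 1 # t) (1 # 0 # s) = w 5 * w 6 * skew_weight w t s"
  "skew_weight w (0 # 0 # t) (1 # 1 # s) = 0"
  using skew_weight_transition[OF transition_add_col] skew_weight_transition[OF transition_new_row]
    skew_weight_transition[OF transition_box_left] skew_weight_transition[OF transition_box_below]
    skew_weight_transition[OF transition_box_isolated] not_admissible_1_0 not_admissible_00_11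
  by (simp_all add: skew_weight_def prod_power_add_exp prod_power_unit_exp mult.commute)

lemma skew_weight_Nil: "skew_weight w [] [] = 1" "skew_weight w [0] [1] = 0"
proof -
  have "Omega_exp 0 0 {} = 0"
    using admissible_Nil(2,3) by (simp add: pair_exp_def)
  then show "skew_weight w [] [] = 1"
    using admissible_Nil(1,3) by (simp add: skew_weight_def Omega_gen_eq_prod)
  show "skew_weight w [0] [1] = 0"
    using not_admissible_0_1 by (simp add: skew_weight_def)
qed

definition degree_identities :: "nat list \<Rightarrow> nat list \<Rightarrow> bool" where
  "degree_identities t s \<longleftrightarrow> (admissible t s \<longrightarrow>
     pair_exp t s 2 + pair_exp t s 4 + pair_exp t s 6 = card (skew (label t) (label s)) \<and>
     pair_exp t s 1 + pair_exp t s 3 + pair_exp t s 5 + card (skew (label t) (label s)) = length t)"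

lemma degree_identities_transition:
  assumes "transition t' s' t s d k" "degree_identities t s"
    and "d 2 + d 4 + d 6 = k" "d 1 + d 3 + d 5 + k + length t = length t'"
  shows "degree_identities t' s'"
  using assms by (auto simp: transition_def degree_identities_def)

lemma degree_identities_bit_strings:
  assumes "length t = length s" "set t \<subseteq> {0, 1}" "set s \<subseteq> {0, 1}"
  shows "degree_identities t s"
proof -
  have "degree_identities t s \<and> degree_identities (0 # t) (1 # s)"
    using assms
  proof (induction t s rule: list_induct2)
    case Nil
    then show ?case
      using admissible_Nil not_admissible_0_1 by (simp add: degree_identities_def)
  next
    case (Cons y t x s)
    note step = degree_identities_transition
    from Cons have IH: "degree_identities t s" "degree_identities (0 # t) (1 # s)"
      and "y \<in> {0, 1}" "x \<in> {0, 1}"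
      by auto
    then consider "y = 0" "x = 0" | "y = 1" "x = 1" | "y = 0" "x = 1" | "y = 1" "x = 0"
      by auto
    then show ?case
    proof cases
      case 1
      with step[OF transition_add_col IH(1)] step[OF transition_box_left IH(2)]
      show ?thesis by (simp add: unit_exp_def)
    next
      case 2
      with step[OF transition_new_row IH(1)] step[OF transition_box_below IH(2)]
      show ?thesis by (simp add: unit_exp_def)
    next
      case 3
      with IH(2) not_admissible_00_11 show ?thesis by (simp add: degree_identities_def)
    next
      case 4
      with step[OF transition_box_isolated IH(1)] not_admissible_1_0
      show ?thesis by (simp add: unit_exp_def degree_identities_def)
    qed
  qed
  then show ?thesis ..
qed

section \<open>The monodromy matrix\<close>

definition vertex :: "(nat \<Rightarrow> mpoly) \<Rightarrow> nat \<Rightarrow> nat \<Rightarrow> nat \<Rightarrow> nat \<Rightarrow> mpoly" where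
  "vertex w c y a x =
     (if (c, y, a, x) = (0, 0, 0, 0) then w 1 else if (c, y, a, x) = (1, 1, 1, 1) then w 2
      else if (c, y, a, x) = (0, 1, 0, 1) then w 3 else if (c, y, a, x) = (1, 0, 1, 0) then w 4
      else if (c, y, a, x) = (0, 1, 1, 0) then w 5 else if (c, y, a, x) = (1, 0, 0, 1) then w 6
      else 0)"

fun monodromy :: "(nat \<Rightarrow> mpoly) \<Rightarrow> nat list \<Rightarrow> nat list \<Rightarrow> nat \<Rightarrow> nat \<Rightarrow> mpoly" where
  "monodromy w [] [] b a = (if b = a then 1 else 0)"
| "monodromy w (y # ys) (x # xs) b a = (\<Sum>c\<in>{0, 1}. monodromy w ys xs b c * vertex w c y a x)"
| "monodromy w _ _ b a = 0"

lemma Rmat_eq_vertex: "Rmat c y a x = vertex omega c y a x"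
  by (simp add: Rmat_def tens_def madd_def msmult_def eu_def vertex_def)

lemma Tmat_eq_monodromy: "Tmat t s b a = monodromy omega t s b a"
  by (induction t s b a rule: Tmat.induct) (simp_all add: Rmat_eq_vertex)

definition bar_weights :: "(nat \<Rightarrow> mpoly) \<Rightarrow> nat \<Rightarrow> mpoly" where
  "bar_weights w = (\<lambda>i. if i = 1 then w 4 else if i = 2 then w 3 else if i = 3 then w 2
     else if i = 4 then w 1 else if i = 5 then w 6 else if i = 6 then w 5 else 0)"

lemma vertex_bar_weights:
  "a \<le> 1 \<Longrightarrow> c \<le> 1 \<Longrightarrow> vertex w c y a x = vertex (bar_weights w) (1 - c) x (1 - a) y"
  by (auto simp: vertex_def bar_weights_def le_Suc_eq)

lemma monodromy_bar_weights:
  "a \<le> 1 \<Longrightarrow> b \<le> 1 \<Longrightarrow> monodromy w t s b a = monodromy (bar_weights w) s t (1 - b) (1 - a)"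
proof (induction t s arbitrary: a rule: list_induct2')
  case 1
  then show ?case by (auto simp: le_Suc_eq)
next
  case (4 y t x s)
  then show ?case
    using vertex_bar_weights[of a] by (simp add: add.commute)
qed simp_all

lemma monodromy_eq_skew_weight:
  assumes "length t = length s" "set t \<subseteq> {0, 1}" "set s \<subseteq> {0, 1}"
  shows "monodromy w t s 0 0 = skew_weight w t s"
    and "w 6 * monodromy w t s 0 1 = skew_weight w (0 # t) (1 # s)"
proof -
  (* The coefficient with auxiliary input 1 and output 0 is carried along: up to the factor
     \<omega>\<^sub>6 it is the weight of the pair (0 # t, 1 # s). *)
  have "monodromy w t s 0 0 = skew_weight w t s
      \<and> w 6 * monodromy w t s 0 1 = skew_weight w (0 # t) (1 # s)"
    using assms
  proof (induction t s rule: list_induct2)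
    case Nil
    then show ?case using skew_weight_Nil by simp
  next
    case (Cons y t x s)
    then have IH: "monodromy w t s 0 0 = skew_weight w t s"
      "w 6 * monodromy w t s 0 1 = skew_weight w (0 # t) (1 # s)"
      and "y \<in> {0, 1}" "x \<in> {0, 1}"
      by auto
    then consider "y = 0" "x = 0" | "y = 1" "x = 1" | "y = 0" "x = 1" | "y = 1" "x = 0"
      by auto
    then show ?case
      using skew_weight_Cons[of w t s] IH[symmetric] by cases (simp_all add: vertex_def ac_simps)
  qed
  then show "monodromy w t s 0 0 = skew_weight w t s"
    and "w 6 * monodromy w t s 0 1 = skew_weight w (0 # t) (1 # s)"
    by simp_all
qed

lemma monodromy_eq_0:
  assumes "s \<in> strings n" "t \<notin> strings n"
  shows "monodromy w t s b a = 0"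
  using assms
proof (induction t s arbitrary: n a rule: list_induct2')
  case (4 y t x s)
  then obtain m where "n = Suc m" "s \<in> strings m" "x \<in> {0, 1}"
    by (cases n) (auto simp: strings_def)
  with 4 show ?case
    by (cases "t \<in> strings m") (auto simp: strings_def vertex_def)
qed (auto simp: strings_def)

section \<open>Homogeneous components\<close>

lemma omega_power: "omega k ^ m = Poly_Mapping.single (Poly_Mapping.single k m) 1"
  by (induction m) (simp_all add: omega_def mult_single single_add[symmetric])

lemma prod_omega_power:
  "finite I \<Longrightarrow> (\<Prod>i\<in>I. omega (\<pi> i) ^ e i)
     = Poly_Mapping.single (\<Sum>i\<in>I. Poly_Mapping.single (\<pi> i) (e i)) 1"
  by (induction I rule: finite_induct) (simp_all add: omega_power mult_single)

lemma deg246_sum_single: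
  "finite I \<Longrightarrow> deg246 (\<Sum>i\<in>I. Poly_Mapping.single (\<pi> i) (e i))
     = (\<Sum>i\<in>I. if \<pi> i \<in> {2, 4, 6} then e i else 0)"
  by (induction I rule: finite_induct) (auto simp: deg246_def lookup_add lookup_single)

lemma hcomp_single:
  "hcomp r (Poly_Mapping.single m 1) = (if deg246 m = r then Poly_Mapping.single m 1 else 0)"
  by (rule poly_mapping_eqI) (auto simp: hcomp_def lookup_mapp lookup_single when_def)

lemma hcomp_zero: "hcomp r 0 = 0"
  by (rule poly_mapping_eqI) (simp add: hcomp_def lookup_mapp)

lemma hcomp_Omega_gen:
  assumes "\<And>i. i \<in> {1..6} \<Longrightarrow> w i = omega (\<pi> i)"
  shows "hcomp r (Omega_gen w l n b)
    = (if (\<Sum>i\<in>{1..6}. if \<pi> i \<in> {2, 4, 6} then Omega_exp l n b i else 0) = r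
       then Omega_gen w l n b else 0)"
proof -
  have "Omega_gen w l n b = (\<Prod>i\<in>{1..6}. omega (\<pi> i) ^ Omega_exp l n b i)"
    unfolding Omega_gen_eq_prod using assms by simp
  then show ?thesis
    by (simp add: prod_omega_power deg246_sum_single hcomp_single)
qed

lemma atLeastAtMost_1_6: "{1..6 :: nat} = {1, 2, 3, 4, 5, 6}"
  by auto

lemma hcomp_Omega:
  "hcomp r (Omega l n b)
     = (if Omega_exp l n b 2 + Omega_exp l n b 4 + Omega_exp l n b 6 = r then Omega l n b else 0)"
  unfolding Omega_def using hcomp_Omega_gen[of omega id, unfolded atLeastAtMost_1_6] by simp

lemma Omegabar_eq_Omega_gen: "Omegabar l n b = Omega_gen (bar_weights omega) l n b"
  by (simp add: Omegabar_def bar_weights_def)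

lemma hcomp_Omegabar:
  "hcomp r (Omegabar l n b)
     = (if Omega_exp l n b 1 + Omega_exp l n b 3 + Omega_exp l n b 5 = r then Omegabar l n b else 0)"
proof -
  define \<pi> :: "nat \<Rightarrow> nat" where "\<pi> i = (if i \<le> 4 then 5 - i else 11 - i)" for i
  have "bar_weights omega i = omega (\<pi> i)" if "i \<in> {1..6}" for i
    using that unfolding atLeastAtMost_1_6 by (auto simp: bar_weights_def \<pi>_def)
  then have "hcomp r (Omegabar l n b)
    = (if (\<Sum>i\<in>{1..6}. if \<pi> i \<in> {2, 4, 6} then Omega_exp l n b i else 0) = r
       then Omegabar l n b else 0)"
    unfolding Omegabar_eq_Omega_gen by (rule hcomp_Omega_gen)
  then show ?thesis
    unfolding atLeastAtMost_1_6 by (simp add: \<pi>_def add.assoc)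
qed

lemma Acomp_eq:
  assumes "\<tau> \<in> strings n" "\<sigma> \<in> strings n"
  shows "Acomp r \<tau> \<sigma> = (if admissible \<tau> \<sigma> \<and> card (skew (label \<tau>) (label \<sigma>)) = r
                            then Omega (ones \<tau>) n (skew (label \<tau>) (label \<sigma>)) else 0)"
proof -
  have bits: "length \<tau> = length \<sigma>" "set \<tau> \<subseteq> {0, 1}" "set \<sigma> \<subseteq> {0, 1}" "length \<tau> = n"
    using assms by (simp_all add: strings_def)
  have "Acomp r \<tau> \<sigma> = hcomp r (skew_weight omega \<tau> \<sigma>)"
    using monodromy_eq_skew_weight(1)[OF bits(1-3)]
    by (simp add: Acomp_def Aop_def Tmat_eq_monodromy)
  also have "\<dots> = hcomp r (if admissible \<tau> \<sigma> then Omega (ones \<tau>) n (skew (label \<tau>) (label \<sigma>)) else 0)"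
    using bits(4) by (simp add: skew_weight_def Omega_def)
  finally show ?thesis
    using degree_identities_bit_strings[OF bits(1-3)] bits(4)
    by (auto simp: degree_identities_def hcomp_zero hcomp_Omega pair_exp_def)
qed

lemma Dcomp_eq:
  assumes "\<tau> \<in> strings n" "\<sigma> \<in> strings n" "r \<le> n"
  shows "Dcomp r \<tau> \<sigma> = (if admissible \<sigma> \<tau> \<and> card (skew (label \<sigma>) (label \<tau>)) = n - r
                            then Omegabar (ones \<sigma>) n (skew (label \<sigma>) (label \<tau>)) else 0)"
proof -
  have bits: "length \<sigma> = length \<tau>" "set \<sigma> \<subseteq> {0, 1}" "set \<tau> \<subseteq> {0, 1}" "length \<sigma> = n"
    using assms by (simp_all add: strings_def)
  have "Dcomp r \<tau> \<sigma> = hcomp r (skew_weight (bar_weights omega) \<sigma> \<tau>)"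
    using monodromy_bar_weights[of 1 1 omega \<tau> \<sigma>] monodromy_eq_skew_weight(1)[OF bits(1-3)]
    by (simp add: Dcomp_def Dop_def Tmat_eq_monodromy)
  also have "\<dots> = hcomp r (if admissible \<sigma> \<tau> then Omegabar (ones \<sigma>) n (skew (label \<sigma>) (label \<tau>)) else 0)"
    using bits(4) by (simp add: skew_weight_def Omegabar_eq_Omega_gen)
  moreover have "(pair_exp \<sigma> \<tau> 1 + pair_exp \<sigma> \<tau> 3 + pair_exp \<sigma> \<tau> 5 = r)
      \<longleftrightarrow> card (skew (label \<sigma>) (label \<tau>)) = n - r" if "admissible \<sigma> \<tau>"
    using degree_identities_bit_strings[OF bits(1-3)] that bits(4) assms(3)
    by (simp add: degree_identities_def) linarith
  ultimately show ?thesis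
    using bits(4) by (auto simp: hcomp_zero hcomp_Omegabar pair_exp_def)
qed

lemma Acomp_column:
  assumes "\<sigma> \<in> strings n" "ones \<sigma> = l" "label \<sigma> = \<mu>"
  shows "Acomp r \<tau> \<sigma> = (if \<tau> \<in> strings n \<and> ones \<tau> = l \<and> contained \<mu> (label \<tau>)
      \<and> broken_rim_hook (skew (label \<tau>) \<mu>) \<and> card (skew (label \<tau>) \<mu>) = r
    then Omega l n (skew (label \<tau>) \<mu>) else 0)"
proof (cases "\<tau> \<in> strings n")
  case False
  then show ?thesis
    using monodromy_eq_0[OF assms(1) False]
    by (simp add: Acomp_def Aop_def Tmat_eq_monodromy hcomp_zero)
qed (use Acomp_eq[OF _ assms(1)] assms(2,3) in \<open>auto simp: admissible_def\<close>)

lemma Dcomp_column: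
  assumes "\<sigma> \<in> strings n" "ones \<sigma> = l" "label \<sigma> = \<mu>" "r \<le> n"
  shows "Dcomp r \<tau> \<sigma> = (if \<tau> \<in> strings n \<and> ones \<tau> = l \<and> contained (label \<tau>) \<mu>
      \<and> broken_rim_hook (skew \<mu> (label \<tau>)) \<and> card (skew \<mu> (label \<tau>)) = n - r
    then Omegabar l n (skew \<mu> (label \<tau>)) else 0)"
proof (cases "\<tau> \<in> strings n")
  case False
  then show ?thesis
    using monodromy_eq_0[OF assms(1) False]
    by (simp add: Dcomp_def Dop_def Tmat_eq_monodromy hcomp_zero)
qed (use Dcomp_eq[OF _ assms(1,4)] assms(2,3) in \<open>auto simp: admissible_def\<close>)

lemma vlam_eq: "vlam n l la \<tau> = (if \<tau> \<in> strings n \<and> ones \<tau> = l \<and> label \<tau> = la then 1 else 0)"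
  by (simp add: vlam_def length_onepos)

lemma sum_fun_apply: "(\<Sum>a\<in>S. f a) x = (\<Sum>a\<in>S. f a x)"
  by (induction S rule: infinite_finite_induct) auto

lemma opapply_vlam_eq_column:
  assumes \<sigma>: "\<sigma> \<in> strings n" "ones \<sigma> = l" "label \<sigma> = \<mu>"
  shows "opapply n M (vlam n l \<mu>) \<tau> = M \<tau> \<sigma>"
proof -
  have "vlam n l \<mu> \<sigma>' = (if \<sigma>' = \<sigma> then 1 else 0)" if "\<sigma>' \<in> strings n" for \<sigma>'
  proof (cases "\<sigma>' = \<sigma>")
    case False
    then have "\<not> (ones \<sigma>' = l \<and> label \<sigma>' = \<mu>)"
      using string_eq_if_label_eq[OF that \<sigma>(1)] \<sigma>(2,3) by metis
    with False show ?thesis by (simp add: vlam_eq)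
  qed (simp add: vlam_eq \<sigma>)
  then have "opapply n M (vlam n l \<mu>) \<tau> = (\<Sum>\<sigma>'\<in>strings n. if \<sigma>' = \<sigma> then M \<tau> \<sigma>' else 0)"
    unfolding opapply_def by (intro sum.cong) simp_all
  also have "\<dots> = M \<tau> \<sigma>"
    using finite_strings \<sigma>(1) by simp
  finally show ?thesis .
qed

lemma sum_vlam_apply:
  assumes "l \<le> n"
  shows "(\<Sum>la\<in>{la \<in> Ppart l n. P la}. (\<lambda>\<tau>. g la * vlam n l la \<tau>)) \<tau>
    = (if \<tau> \<in> strings n \<and> ones \<tau> = l \<and> P (label \<tau>) then g (label \<tau>) else 0)"
proof (cases "\<tau> \<in> strings n \<and> ones \<tau> = l")
  case True
  then have "label \<tau> \<in> Ppart l n"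
    using label_in_Ppart[of \<tau>] by (simp add: strings_def)
  have "(\<Sum>la\<in>{la \<in> Ppart l n. P la}. (\<lambda>\<tau>. g la * vlam n l la \<tau>)) \<tau>
      = (\<Sum>la\<in>{la \<in> Ppart l n. P la}. if label \<tau> = la then g la else 0)"
    unfolding sum_fun_apply using True by (intro sum.cong) (simp_all add: vlam_eq)
  also have "\<dots> = (if label \<tau> \<in> {la \<in> Ppart l n. P la} then g (label \<tau>) else 0)"
    using finite_Ppart[OF assms] by simp
  finally show ?thesis
    using True \<open>label \<tau> \<in> Ppart l n\<close> by simp
next
  case False
  then show ?thesis
    unfolding sum_fun_apply by (auto simp: vlam_eq)
qed

lemma opapply_vlam:
  assumes "l \<le> n" "\<mu> \<in> Ppart l n"
    and M: "\<And>\<tau> \<sigma>. \<sigma> \<in> strings n \<Longrightarrow> ones \<sigma> = l \<Longrightarrow> label \<sigma> = \<mu> \<Longrightarrow>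
      M \<tau> \<sigma> = (if \<tau> \<in> strings n \<and> ones \<tau> = l \<and> P (label \<tau>) then g (label \<tau>) else 0)"
  shows "opapply n M (vlam n l \<mu>) = (\<Sum>la\<in>{la \<in> Ppart l n. P la}. (\<lambda>\<tau>. g la * vlam n l la \<tau>))"
proof
  fix \<tau>
  obtain \<sigma> where \<sigma>: "\<sigma> \<in> strings n" "ones \<sigma> = l" "label \<sigma> = \<mu>"
    using string_of_partition[OF assms(2,1)] by blast
  show "opapply n M (vlam n l \<mu>) \<tau> = (\<Sum>la\<in>{la \<in> Ppart l n. P la}. (\<lambda>\<tau>. g la * vlam n l la \<tau>)) \<tau>"
    unfolding opapply_vlam_eq_column[OF \<sigma>] sum_vlam_apply[OF assms(1)] using M[OF \<sigma>] .
qed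

theorem proposition4p5:
  fixes l n :: nat and \<mu> :: "nat \<Rightarrow> nat"
  assumes "l \<le> n" and "\<mu> \<in> Ppart l n"
  shows "(\<forall>r. (1 \<le> r \<and> r \<le> n - 1) \<or> r = 0 \<longrightarrow>
           opapply n (Acomp r) (vlam n l \<mu>) =
           (\<Sum>la\<in>{la \<in> Ppart l n. contained \<mu> la \<and> broken_rim_hook (skew la \<mu>)
                       \<and> card (skew la \<mu>) = r}.
              (\<lambda>\<tau>. Omega l n (skew la \<mu>) * vlam n l la \<tau>))) \<and>
         (\<forall>r. (1 \<le> r \<and> r \<le> n - 1) \<or> r = n \<longrightarrow>
           opapply n (Dcomp r) (vlam n l \<mu>) =
           (\<Sum>la\<in>{la \<in> Ppart l n. contained la \<mu> \<and> broken_rim_hook (skew \<mu> la)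
                       \<and> card (skew \<mu> la) = n - r}.
              (\<lambda>\<tau>. Omegabar l n (skew \<mu> la) * vlam n l la \<tau>)))"
proof (intro conjI allI impI)
  fix r :: nat
  show "opapply n (Acomp r) (vlam n l \<mu>) =
      (\<Sum>la\<in>{la \<in> Ppart l n. contained \<mu> la \<and> broken_rim_hook (skew la \<mu>) \<and> card (skew la \<mu>) = r}.
        (\<lambda>\<tau>. Omega l n (skew la \<mu>) * vlam n l la \<tau>))"
    by (rule opapply_vlam[OF assms]) (rule Acomp_column)
  assume "(1 \<le> r \<and> r \<le> n - 1) \<or> r = n"
  then have "r \<le> n" by auto
  then show "opapply n (Dcomp r) (vlam n l \<mu>) =
      (\<Sum>la\<in>{la \<in> Ppart l n. contained la \<mu> \<and> broken_rim_hook (skew \<mu> la) \<and> card (skew \<mu> la) = n - r}.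
        (\<lambda>\<tau>. Omegabar l n (skew \<mu> la) * vlam n l la \<tau>))"
    by (intro opapply_vlam[OF assms] Dcomp_column)
qed

end
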